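(* Let $p\geq 5$ be a prime and let $r$ be a positive integer such that $3$ does not divide $p^{r}+1$. Then $A(x)=x^{p^r+2}$ is an Alltop function on $\mathbb{F}_{p^{2r}}$.
   Context: For a function $f:\mathbb{F}_{p^n}\to\mathbb{F}_{p^n}$ and $a\in\mathbb{F}_{p^n}$, the difference function is $\Delta_{f,a}(x)=f(x+a)-f(x)$. A function $f:\mathbb{F}_{p^n}\to\mathbb{F}_{p^n}$ is planar if for every $a\in\mathbb{F}_{p^n}^*$ the map $x\mapsto\Delta_{f,a}(x)$ is a bijection of $\mathbb{F}_{p^n}$. A function $A:\mathbb{F}_{p^n}\to\mathbb{F}_{p^n}$ is an Alltop function if $\Delta_{A,a}$ is a planar function for every $a\in\mathbb{F}_{p^n}^*$. *)

theory Defs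
  imports Main "HOL-Computational_Algebra.Primes"
begin

definition diff_fun :: "('a::ring \<Rightarrow> 'a) \<Rightarrow> 'a \<Rightarrow> 'a \<Rightarrow> 'a" where
  "diff_fun f a = (\<lambda>x. f (x + a) - f x)"

definition planar :: "('a::ring \<Rightarrow> 'a) \<Rightarrow> bool" where
  "planar f \<longleftrightarrow> (\<forall>a. a \<noteq> 0 \<longrightarrow> bij (diff_fun f a))"

definition alltop :: "('a::ring \<Rightarrow> 'a) \<Rightarrow> bool" where
  "alltop A \<longleftrightarrow> (\<forall>a. a \<noteq> 0 \<longrightarrow> planar (diff_fun A a))"

end

theory Submission
  imports Defs "HOL-Number_Theory.Residues"
begin

text \<open>
  Write \<open>q = p^r\<close>, so that \<open>x \<mapsto> x^q\<close> is additive and an involution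
  on the field with \<open>q\<^sup>2\<close> elements.
  Then the second difference \<open>\<Delta>\<^sub>b \<Delta>\<^sub>a x^(q+2)\<close> is the affine map
  \<open>2ab x^q + 2(ab^q + a^q b) x + c\<close>, and it is a bijection iff its linear part has trivial kernel.
  A nonzero kernel element \<open>z\<close> gives three elements \<open>a^(q-1), b^(q-1), z^(q-1)\<close> of norm 1 summing
  to 0; their ratio is then a primitive cube root of unity \<open>t\<close> with \<open>t^(q+1) = 1\<close>,
  forcing \<open>3 dvd q + 1\<close>.
\<close>

lemma power_card_UNIV_eq_self:
  fixes x :: "'a::{field,finite}"
  shows "x ^ card (UNIV :: 'a set) = x"
proof (cases "x = 0")
  case False
  have card_pos: "card (UNIV :: 'a set) > 0"
    by (rule finite_UNIV_card_ge_0) simp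
  have "(\<Prod>y\<in>UNIV - {0}. x * y) = (\<Prod>y\<in>UNIV - {0}. y)"
    by (rule prod.reindex_bij_witness[of _ "\<lambda>y. y / x" "\<lambda>y. x * y"]) (use False in auto)
  moreover have "(\<Prod>y\<in>UNIV - {0}. x * y) = x ^ (card (UNIV :: 'a set) - 1) * (\<Prod>y\<in>UNIV - {0}. y)"
    by (simp add: prod.distrib)
  moreover have "(\<Prod>y\<in>UNIV - {0}. y) \<noteq> (0::'a)"
    by simp
  ultimately have "x ^ (card (UNIV :: 'a set) - 1) = 1"
    by (metis mult_cancel_right2)
  then show ?thesis
    using card_pos by (metis Suc_diff_1 power_Suc mult_1_right)
qed (simp add: finite_UNIV_card_ge_0)

lemma CHAR_eq_if_card_prime_power:
  assumes "prime p" and "card (UNIV :: 'a::{field,finite} set) = p ^ n"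
  shows "CHAR('a) = p"
proof -
  have "prime CHAR('a)"
    by (rule prime_CHAR_semidom) (simp add: finite_imp_CHAR_pos)
  moreover have "CHAR('a) dvd p ^ n"
    using CHAR_dvd_CARD[where 'a = 'a] assms(2) by simp
  ultimately show ?thesis
    using assms(1) prime_dvd_power primes_dvd_imp_eq by blast
qed

lemma of_nat_neq_0_if_less_CHAR:
  assumes "0 < n" and "n < CHAR('a::semiring_1)"
  shows "(of_nat n :: 'a) \<noteq> 0"
  using assms by (auto simp: of_nat_eq_0_iff_char_dvd dest: dvd_imp_le)

lemma additive_power_diff:
  fixes x y :: "'a::comm_ring_1"
  assumes additive: "\<And>x y::'a. (x + y) ^ q = x ^ q + y ^ q"
  shows "(x - y) ^ q = x ^ q - y ^ q"
  using additive[of "x - y" y] by simp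

lemma additive_power_minus:
  fixes x :: "'a::comm_ring_1"
  assumes additive: "\<And>x y::'a. (x + y) ^ q = x ^ q + y ^ q"
  shows "(- x) ^ q = - (x ^ q)"
  using additive_power_diff[OF additive, of 0 x] additive_power_diff[OF additive, of 0 0] by simp

lemma second_difference_power_add_2:
  fixes a b x :: "'a::comm_ring_1"
  assumes additive: "\<And>x y::'a. (x + y) ^ q = x ^ q + y ^ q"
  shows "diff_fun (diff_fun (\<lambda>x. x ^ (q + 2)) a) b x
    = 2*a*b * x^q + 2*(a*b^q + a^q*b) * x + ((b^q + a^q)*(b + a)^2 - b^q*b^2 - a^q*a^2)"
proof -
  have "diff_fun (diff_fun (\<lambda>x. x ^ (q + 2)) a) b x
      = (x^q + b^q + a^q)*(x + b + a)^2 - (x^q + b^q)*(x + b)^2 - ((x^q + a^q)*(x + a)^2 - x^q*x^2)"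
    unfolding diff_fun_def power_add additive by (simp add: algebra_simps)
  also have "\<dots> = 2*a*b * x^q + 2*(a*b^q + a^q*b) * x
      + ((b^q + a^q)*(b + a)^2 - b^q*b^2 - a^q*a^2)"
    by (simp add: power2_eq_square algebra_simps)
  finally show ?thesis .
qed

lemma power_div_self_norm_eq_1:
  fixes y :: "'a::field"
  assumes "y \<noteq> 0" and involution: "y ^ (q * q) = y"
  shows "(y ^ q / y) ^ (q + 1) = 1"
proof -
  have "(y ^ q / y) ^ q = y / y ^ q"
    by (simp add: power_divide flip: power_mult) (simp add: involution)
  then show ?thesis
    using assms(1) by simp
qed

lemma primitive_cube_root_of_unity_power_eq_1_imp_dvd:
  fixes t :: "'a::field"
  assumes cube_root: "t\<^sup>2 + t + 1 = 0" and three: "(3::'a) \<noteq> 0" and "t ^ n = 1"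
  shows "3 dvd n"
proof -
  have t3: "t ^ 3 = 1"
  proof -
    have "t ^ 3 - 1 = (t - 1) * (t\<^sup>2 + t + 1)"
      by (simp add: algebra_simps power2_eq_square power3_eq_cube)
    then show ?thesis
      using cube_root by simp
  qed
  have "t \<noteq> 1"
    using cube_root three by (auto simp: numeral_3_eq_3)
  moreover have "t ^ (n mod 3) = 1"
  proof -
    have "t ^ n = (t ^ 3) ^ (n div 3) * t ^ (n mod 3)"
      by (metis div_mult_mod_eq power_add power_mult mult.commute)
    then show ?thesis
      using \<open>t ^ n = 1\<close> t3 by simp
  qed
  moreover have "t\<^sup>2 \<noteq> 1"
    using t3 \<open>t \<noteq> 1\<close> by (metis power2_eq_square power3_eq_cube mult_1_left)
  moreover have "n mod 3 = 0 \<or> n mod 3 = 1 \<or> n mod 3 = 2"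
    by presburger
  ultimately have "n mod 3 = 0"
    by auto
  then show ?thesis
    by presburger
qed

lemma norm_1_sum_zero_imp_dvd:
  fixes U V W :: "'a::field"
  assumes additive: "\<And>x y::'a. (x + y) ^ q = x ^ q + y ^ q"
    and U: "U ^ (q + 1) = 1" and V: "V ^ (q + 1) = 1" and W: "W ^ (q + 1) = 1"
    and sum: "U + V + W = 0" and three: "(3::'a) \<noteq> 0"
  shows "3 dvd q + 1"
proof -
  have "U \<noteq> 0" "V \<noteq> 0"
    using U V by auto
  have Uq: "U ^ q = 1 / U" and Vq: "V ^ q = 1 / V"
    using U V \<open>U \<noteq> 0\<close> \<open>V \<noteq> 0\<close> by (simp_all add: field_simps)
  have "W = - (U + V)"
    using sum by (simp add: eq_neg_iff_add_eq_0 algebra_simps)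
  then have "W ^ q = - (U ^ q + V ^ q)"
    by (simp only: additive_power_minus[OF additive] additive)
  with \<open>W = - (U + V)\<close> have "W ^ (q + 1) = (- (U ^ q + V ^ q)) * (- (U + V))"
    by (simp only: power_Suc2 Suc_eq_plus1 [symmetric])
  then have "W ^ (q + 1) = (U ^ q + V ^ q) * (U + V)"
    by (simp only: minus_mult_minus)
  then have "(1 / U + 1 / V) * (U + V) = 1"
    using W Uq Vq by simp
  then have sum_squares: "U\<^sup>2 + U * V + V\<^sup>2 = 0"
    using \<open>U \<noteq> 0\<close> \<open>V \<noteq> 0\<close> by (simp add: field_simps power2_eq_square)
  show ?thesis
  proof (rule primitive_cube_root_of_unity_power_eq_1_imp_dvd[OF _ three])
    show "(U / V)\<^sup>2 + U / V + 1 = 0"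
      using sum_squares \<open>V \<noteq> 0\<close> by (simp add: field_simps power2_eq_square)
    show "(U / V) ^ (q + 1) = 1"
      using U V by (simp add: power_divide)
  qed
qed

lemma frobenius_twist_kernel_trivial:
  fixes a b z :: "'a::field"
  assumes additive: "\<And>x y::'a. (x + y) ^ q = x ^ q + y ^ q"
    and involution: "\<And>x::'a. x ^ (q * q) = x"
    and three: "(3::'a) \<noteq> 0" and not_dvd: "\<not> 3 dvd q + 1"
    and "a \<noteq> 0" "b \<noteq> 0"
    and kernel: "a*b * z^q + (a*b^q + a^q*b) * z = 0"
  shows "z = 0"
proof (rule ccontr)
  assume "z \<noteq> 0"
  have "z ^ q / z + b ^ q / b + a ^ q / a = (a*b * z^q + (a*b^q + a^q*b) * z) / (a*b*z)"
    using \<open>a \<noteq> 0\<close> \<open>b \<noteq> 0\<close> \<open>z \<noteq> 0\<close> by (simp add: field_simps)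
  then have "z ^ q / z + b ^ q / b + a ^ q / a = 0"
    using kernel by simp
  then have "3 dvd q + 1"
    using norm_1_sum_zero_imp_dvd[OF additive power_div_self_norm_eq_1[OF \<open>z \<noteq> 0\<close> involution]
        power_div_self_norm_eq_1[OF \<open>b \<noteq> 0\<close> involution]
        power_div_self_norm_eq_1[OF \<open>a \<noteq> 0\<close> involution] _ three]
    by blast
  with not_dvd show False ..
qed

lemma alltop_power_frobenius_add_2:
  assumes additive: "\<And>x y::'a::{field,finite}. (x + y) ^ q = x ^ q + y ^ q"
    and involution: "\<And>x::'a. x ^ (q * q) = x"
    and two: "(2::'a) \<noteq> 0" and three: "(3::'a) \<noteq> 0" and not_dvd: "\<not> 3 dvd q + 1"
  shows "alltop (\<lambda>x::'a. x ^ (q + 2))"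
  unfolding alltop_def planar_def
proof (intro allI impI)
  fix a b :: 'a
  assume "a \<noteq> 0" "b \<noteq> 0"
  define L where "L x = 2*a*b * x^q + 2*(a*b^q + a^q*b) * x" for x :: 'a
  define g where "g = diff_fun (diff_fun (\<lambda>x. x ^ (q + 2)) a) b"
  have g_diff: "g x - g y = L (x - y)" for x y
  proof -
    have "g x - g y = L x - L y"
      unfolding g_def L_def second_difference_power_add_2[OF additive] by simp
    also have "\<dots> = L (x - y)"
      unfolding L_def additive_power_diff[OF additive] by (simp add: right_diff_distrib)
    finally show ?thesis .
  qed
  have L_kernel: "z = 0" if "L z = 0" for z
  proof -
    have "2 * (a*b * z^q + (a*b^q + a^q*b) * z) = 0"
      using that unfolding L_def by (simp add: algebra_simps)
    with two have "a*b * z^q + (a*b^q + a^q*b) * z = 0"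
      by (simp only: mult_eq_0_iff) simp
    then show ?thesis
      by (rule frobenius_twist_kernel_trivial[OF additive involution three not_dvd
            \<open>a \<noteq> 0\<close> \<open>b \<noteq> 0\<close>])
  qed
  have "inj g"
  proof (rule injI)
    fix x y
    assume "g x = g y"
    then have "L (x - y) = 0"
      using g_diff[of x y] by simp
    then have "x - y = 0"
      by (rule L_kernel)
    then show "x = y"
      by simp
  qed
  then show "bij g"
    by (simp add: bij_def finite_UNIV_inj_surj)
qed

theorem theorem4:
  fixes p r :: nat
  assumes "prime p" and "p \<ge> 5" and "r > 0"
    and "\<not> (3 dvd p ^ r + 1)"
    and "card (UNIV :: 'a set) = p ^ (2 * r)"
  shows "alltop (\<lambda>x::'a::{field,finite}. x ^ (p ^ r + 2))"
proof (rule alltop_power_frobenius_add_2)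
  have char: "CHAR('a) = p"
    using CHAR_eq_if_card_prime_power assms(1,5) by blast
  show "(x + y) ^ p ^ r = x ^ p ^ r + y ^ p ^ r" for x y :: 'a
    by (rule freshmans_dream') (simp_all add: char assms(1))
  show "x ^ (p ^ r * p ^ r) = x" for x :: 'a
    using power_card_UNIV_eq_self[of x] assms(5) by (simp add: mult_2 power_add)
  show "(2::'a) \<noteq> 0" "(3::'a) \<noteq> 0"
    using of_nat_neq_0_if_less_CHAR[of 2, where 'a = 'a] of_nat_neq_0_if_less_CHAR[of 3, where 'a = 'a]
      char assms(2) by simp_all
  show "\<not> 3 dvd p ^ r + 1"
    by (fact assms(4))
qed

end
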